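(* Let $W, w_1,w_2,w_3,c_1,c_2,c_3$ be positive integers with $w_1<w_2<w_3$, $c_1<c_2<c_3$ and $\frac{c_1}{w_1}>\frac{c_2}{w_2}>\frac{c_3}{w_3}$. Let $D=\{(z_1,z_2)\in(\mathbb{Z}_{\ge 0})^2: z_iw_i\le W/2,\ i=1,2\}$ and define $C:D\to\mathbb{R}$ by $C(z_1,z_2)=c_1z_1+c_2z_2+c_3\left\lceil\frac{W-w_1z_1-w_2z_2}{w_3}\right\rceil$. Then $(D,C)$ is an Ameso($c_3$) pair, i.e., minimizing $C$ over $D$ is an Ameso($c_3$) optimization problem.
   Context: Floors and ceilings of vectors are taken componentwise. A set $D^n\subseteq\mathbb{Z}^n$ is an Ameso set if $\lceil(\vec x+\vec y)/2\rceil,\lfloor(\vec x+\vec y)/2\rfloor\in D^n$ for all $\vec x,\vec y\in D^n$. For $K\ge 0$, $(D^n,f)$ is an Ameso($K$) pair if $D^n$ is an Ameso set, $f:D^n\to\mathbb{R}$ is bounded below, and $f(\vec x)+f(\vec y)+K\ge f(\lceil(\vec x+\vec y)/2\rceil)+f(\lfloor(\vec x+\vec y)/2\rfloor)$ for all $\vec x,\vec y\in D^n$; minimizing $f$ over $D^n$ is then called an Ameso($K$) optimization problem. *)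

theory Defs
  imports "HOL-Analysis.Analysis"
begin

definition mid_ceil :: "int ^ 'n \<Rightarrow> int ^ 'n \<Rightarrow> int ^ 'n" where
  "mid_ceil x y = (\<chi> i. \<lceil>(real_of_int (x $ i) + real_of_int (y $ i)) / 2\<rceil>)"

definition mid_floor :: "int ^ 'n \<Rightarrow> int ^ 'n \<Rightarrow> int ^ 'n" where
  "mid_floor x y = (\<chi> i. \<lfloor>(real_of_int (x $ i) + real_of_int (y $ i)) / 2\<rfloor>)"

definition ameso_set :: "(int ^ 'n) set \<Rightarrow> bool" where
  "ameso_set D \<longleftrightarrow> (\<forall>x\<in>D. \<forall>y\<in>D. mid_ceil x y \<in> D \<and> mid_floor x y \<in> D)"

definition ameso_pair :: "real \<Rightarrow> (int ^ 'n) set \<Rightarrow> (int ^ 'n \<Rightarrow> real) \<Rightarrow> bool" where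
  "ameso_pair K D f \<longleftrightarrow> K \<ge> 0 \<and> ameso_set D \<and> (\<exists>m. \<forall>x\<in>D. m \<le> f x) \<and>
     (\<forall>x\<in>D. \<forall>y\<in>D. f x + f y + K \<ge> f (mid_ceil x y) + f (mid_floor x y))"

end

theory Submission
  imports Defs
begin

text \<open>The rounded midpoints of \<open>x\<close> and \<open>y\<close> add up to \<open>x + y\<close>, so a function that is affine
  in the coordinates has the same total on them as on \<open>x\<close>, \<open>y\<close>. The cost is
  \<open>C = L + c\<^sub>3 \<lceil>A\<rceil>\<close> with \<open>L\<close>, \<open>A\<close> affine, and the sum of the ceilings of two reals with a
  given sum is determined up to 1; hence rounding loses at most \<open>c\<^sub>3\<close>. The domain is an
  intersection of coordinate intervals, so it contains the rounded midpoints of its points, and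
  \<open>C \<ge> 0\<close> on it.\<close>

lemma ceiling_plus_floor_half_sum:
  "\<lceil>(real_of_int a + real_of_int b) / 2\<rceil> + \<lfloor>(real_of_int a + real_of_int b) / 2\<rfloor> = a + b"
proof -
  obtain k r where ab: "a + b = 2 * k + r" and r: "r = 0 \<or> r = 1"
    by (metis div_mult_mod_eq mod2_eq_if mult.commute)
  then have mid: "(real_of_int a + real_of_int b) / 2 = of_int r / 2 + of_int k"
    by (simp add: field_simps flip: of_int_add)
  from r show ?thesis unfolding mid ab by (auto simp: ceiling_altdef)
qed

lemma mid_ceil_plus_mid_floor: "mid_ceil x y + mid_floor x y = x + y"
  by (simp add: vec_eq_iff mid_ceil_def mid_floor_def ceiling_plus_floor_half_sum)

lemma mid_ceil_between:
  "min (x $ i) (y $ i) \<le> mid_ceil x y $ i" "mid_ceil x y $ i \<le> max (x $ i) (y $ i)"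
  unfolding mid_ceil_def by (auto simp: le_ceiling_iff ceiling_le_iff min_def max_def)

lemma mid_floor_between:
  "min (x $ i) (y $ i) \<le> mid_floor x y $ i" "mid_floor x y $ i \<le> max (x $ i) (y $ i)"
  unfolding mid_floor_def by (auto simp: le_floor_iff floor_le_iff min_def max_def)

lemma ameso_set_Int: "ameso_set A \<Longrightarrow> ameso_set B \<Longrightarrow> ameso_set (A \<inter> B)"
  by (simp add: ameso_set_def)

lemma ameso_set_coordinate_interval:
  assumes "\<And>a b m. P a \<Longrightarrow> P b \<Longrightarrow> min a b \<le> m \<Longrightarrow> m \<le> max a b \<Longrightarrow> P m"
  shows "ameso_set {z :: int ^ 'n. P (z $ i)}"
  unfolding ameso_set_def
proof (intro ballI conjI)
  fix x y assume "x \<in> {z. P (z $ i)}" "y \<in> {z. P (z $ i)}"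
  then have "\<And>m. min (x $ i) (y $ i) \<le> m \<Longrightarrow> m \<le> max (x $ i) (y $ i) \<Longrightarrow> P m"
    using assms[of "x $ i" "y $ i"] by simp
  then show "mid_ceil x y \<in> {z. P (z $ i)}" "mid_floor x y \<in> {z. P (z $ i)}"
    using mid_ceil_between[where x = x and y = y and i = i]
      mid_floor_between[where x = x and y = y and i = i]
    by simp_all
qed

lemma ameso_set_coordinate_weight_bound:
  fixes w :: int and r :: real
  assumes "0 \<le> w"
  shows "ameso_set {z :: int ^ 'n. 0 \<le> z $ i \<and> real_of_int (z $ i * w) \<le> r}"
proof (rule ameso_set_coordinate_interval)
  fix a b m :: int
  assume a: "0 \<le> a \<and> real_of_int (a * w) \<le> r" and b: "0 \<le> b \<and> real_of_int (b * w) \<le> r"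
    and m: "min a b \<le> m" "m \<le> max a b"
  have "real_of_int (max a b * w) \<le> r" using a b by (simp add: max_def)
  moreover have "real_of_int (m * w) \<le> real_of_int (max a b * w)"
    using m \<open>0 \<le> w\<close> by (simp add: mult_right_mono)
  moreover have "0 \<le> m" using a b m by linarith
  ultimately show "0 \<le> m \<and> real_of_int (m * w) \<le> r" by linarith
qed

lemma affine2_pair_sum_eq:
  fixes g :: "int ^ 2 \<Rightarrow> real"
  assumes g: "\<And>z. g z = a + b * real_of_int (z $ 1) + c * real_of_int (z $ 2)"
    and "u + v = u' + v'"
  shows "g u + g v = g u' + g v'"
proof -
  have "real_of_int (u $ i) + real_of_int (v $ i) = real_of_int (u' $ i) + real_of_int (v' $ i)" for i
    using \<open>u + v = u' + v'\<close> by (metis of_int_add vector_add_component)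
  from this[of 1] this[of 2] show ?thesis unfolding g by algebra
qed

lemma ceiling_pair_le_of_same_sum:
  fixes a b p q :: real
  assumes "a + b = p + q"
  shows "\<lceil>p\<rceil> + \<lceil>q\<rceil> \<le> \<lceil>a\<rceil> + \<lceil>b\<rceil> + 1"
proof -
  have "of_int (\<lceil>p\<rceil> + \<lceil>q\<rceil>) < p + q + 2" by linarith
  also have "\<dots> \<le> of_int (\<lceil>a\<rceil> + \<lceil>b\<rceil> + 2)" using assms by linarith
  finally show ?thesis by linarith
qed

lemma ameso_pair_affine_plus_ceiling:
  fixes L A f :: "int ^ 'n \<Rightarrow> real"
  assumes "ameso_set D" and "c \<ge> 0" and "\<forall>z\<in>D. m \<le> f z"
    and L: "\<And>u v u' v'. u + v = u' + v' \<Longrightarrow> L u + L v = L u' + L v'"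
    and A: "\<And>u v u' v'. u + v = u' + v' \<Longrightarrow> A u + A v = A u' + A v'"
    and f: "\<And>z. f z = L z + c * of_int \<lceil>A z\<rceil>"
  shows "ameso_pair c D f"
proof -
  have "f (mid_ceil x y) + f (mid_floor x y) \<le> f x + f y + c" for x y
  proof -
    let ?u = "mid_ceil x y" and ?v = "mid_floor x y"
    have L_eq: "L ?u + L ?v = L x + L y" and A_eq: "A x + A y = A ?u + A ?v"
      using L A mid_ceil_plus_mid_floor by metis+
    have "\<lceil>A ?u\<rceil> + \<lceil>A ?v\<rceil> \<le> \<lceil>A x\<rceil> + \<lceil>A y\<rceil> + 1"
      using A_eq by (rule ceiling_pair_le_of_same_sum)
    then have "c * of_int (\<lceil>A ?u\<rceil> + \<lceil>A ?v\<rceil>) \<le> c * of_int (\<lceil>A x\<rceil> + \<lceil>A y\<rceil> + 1)"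
      using \<open>c \<ge> 0\<close> by (intro mult_left_mono) simp_all
    then show ?thesis unfolding f using L_eq by (simp add: algebra_simps)
  qed
  then show ?thesis unfolding ameso_pair_def using assms(1-3) by auto
qed

theorem theorem5:
  fixes W w1 w2 w3 c1 c2 c3 :: int
    and D :: "(int ^ 2) set" and C :: "int ^ 2 \<Rightarrow> real"
  assumes pos: "W > 0" "w1 > 0" "w2 > 0" "w3 > 0" "c1 > 0" "c2 > 0" "c3 > 0"
    and w_ord: "w1 < w2" "w2 < w3"
    and c_ord: "c1 < c2" "c2 < c3"
    and ratio: "real_of_int c1 / real_of_int w1 > real_of_int c2 / real_of_int w2"
               "real_of_int c2 / real_of_int w2 > real_of_int c3 / real_of_int w3"
    and D_def: "D = {z. 0 \<le> z $ 1 \<and> 0 \<le> z $ 2 \<and>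
                     real_of_int (z $ 1 * w1) \<le> real_of_int W / 2 \<and>
                     real_of_int (z $ 2 * w2) \<le> real_of_int W / 2}"
    and C_def: "\<And>z. C z = real_of_int (c1 * z $ 1 + c2 * z $ 2) +
                 real_of_int c3 * real_of_int
                   \<lceil>real_of_int (W - w1 * z $ 1 - w2 * z $ 2) / real_of_int w3\<rceil>"
  shows "ameso_pair (real_of_int c3) D C"
proof (rule ameso_pair_affine_plus_ceiling[OF _ _ _
      affine2_pair_sum_eq[where a = 0 and b = c1 and c = c2]
      affine2_pair_sum_eq[where a = "W / w3" and b = "- w1 / w3" and c = "- w2 / w3"] C_def])
  have D_split: "D = {z. 0 \<le> z $ 1 \<and> real_of_int (z $ 1 * w1) \<le> real_of_int W / 2} \<inter>
            {z. 0 \<le> z $ 2 \<and> real_of_int (z $ 2 * w2) \<le> real_of_int W / 2}"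
    unfolding D_def by auto
  show "ameso_set D"
    unfolding D_split using pos(2,3)
    by (intro ameso_set_Int ameso_set_coordinate_weight_bound) simp_all
  show "\<forall>z\<in>D. 0 \<le> C z"
  proof
    fix z assume "z \<in> D"
    then have "0 \<le> z $ 1" "0 \<le> z $ 2" and half:
        "real_of_int (z $ 1 * w1) \<le> real_of_int W / 2" "real_of_int (z $ 2 * w2) \<le> real_of_int W / 2"
      unfolding D_def by simp_all
    have "real_of_int (w1 * z $ 1 + w2 * z $ 2) \<le> real_of_int W"
      using half by (simp only: of_int_add mult.commute[of w1] mult.commute[of w2])
    then have "0 \<le> real_of_int (W - w1 * z $ 1 - w2 * z $ 2) / real_of_int w3"
      using pos(4) by (intro divide_nonneg_pos) simp_all
    then have "0 \<le> \<lceil>real_of_int (W - w1 * z $ 1 - w2 * z $ 2) / real_of_int w3\<rceil>"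
      by linarith
    moreover have "0 \<le> c1 * z $ 1 + c2 * z $ 2" using \<open>0 \<le> z $ 1\<close> \<open>0 \<le> z $ 2\<close> pos by simp
    ultimately show "0 \<le> C z"
      unfolding C_def using less_imp_le[OF pos(7)]
      by (intro add_nonneg_nonneg mult_nonneg_nonneg) (simp_all only: of_int_0_le_iff)
  qed
qed (use pos in \<open>simp_all add: diff_divide_distrib\<close>)

end
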